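(* Let $\delta\ge0$ and let $T\in C^1(\mathbb{T}^1)$ be a diffeomorphism with $T'>0$ and rotation number $\rho\in D_\delta$, having an invariant probability measure with continuous positive density $h$. Suppose that for some $\nu\in\left[\frac{\delta}{1+\delta},1\right]$ there is $C$ with $|(T^{q_n})'(\xi)-1|\le C\Delta_n^\nu$ for all $n\ge0$, $\xi\in\mathbb{T}^1$. Then $h\in C^{\nu(1+\delta)-\delta}(\mathbb{T}^1)$.
   Context: An irrational $\rho$ is in $D_\delta$ if there is $C>0$ with $|\rho-p/q|\ge Cq^{-2-\delta}$ for all rationals $p/q$. Write $\rho\in(0,1)$ as a continued fraction $\rho=[k_1,k_2,\dots]$ with convergents $p_n/q_n$, where $p_0=0,q_0=1,p_{-1}=1,q_{-1}=0$, $p_n=k_np_{n-1}+p_{n-2}$, $q_n=k_nq_{n-1}+q_{n-2}$; set $\Delta_n=|q_n\rho-p_n|$. $C^\alpha$ for $\alpha\in(0,1]$ means $\alpha$-Hölder continuous; $C^0$ means continuous. *)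

theory Defs
  imports "HOL-Analysis.Analysis"
begin

definition in_D :: "real \<Rightarrow> real \<Rightarrow> bool" where
  "in_D \<delta> \<rho> \<longleftrightarrow> \<rho> \<notin> \<rat> \<and>
     (\<exists>C>0. \<forall>(p::int) (q::nat). q > 0 \<longrightarrow> \<bar>\<rho> - real_of_int p / real q\<bar> \<ge> C * real q powr (-2 - \<delta>))"

text \<open>Gauss-map remainders: x_1 = rho, x_{n+1} = frac(1/x_n); cf_rem rho n = x_{n+1}.\<close>
fun cf_rem :: "real \<Rightarrow> nat \<Rightarrow> real" where
  "cf_rem \<rho> 0 = \<rho>"
| "cf_rem \<rho> (Suc n) = frac (1 / cf_rem \<rho> n)"

text \<open>Partial quotients k_n (n \<ge> 1) of rho = [k_1, k_2, ...].\<close>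
definition cf_digit :: "real \<Rightarrow> nat \<Rightarrow> nat" where
  "cf_digit \<rho> n = nat \<lfloor>1 / cf_rem \<rho> (n - 1)\<rfloor>"

text \<open>Convergents p_n/q_n with p_0=0, q_0=1, p_{-1}=1, q_{-1}=0.\<close>
fun cf_p :: "real \<Rightarrow> nat \<Rightarrow> nat" where
  "cf_p \<rho> 0 = 0"
| "cf_p \<rho> (Suc 0) = 1"
| "cf_p \<rho> (Suc (Suc n)) = cf_digit \<rho> (n + 2) * cf_p \<rho> (Suc n) + cf_p \<rho> n"

fun cf_q :: "real \<Rightarrow> nat \<Rightarrow> nat" where
  "cf_q \<rho> 0 = 1"
| "cf_q \<rho> (Suc 0) = cf_digit \<rho> 1"
| "cf_q \<rho> (Suc (Suc n)) = cf_digit \<rho> (n + 2) * cf_q \<rho> (Suc n) + cf_q \<rho> n"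

definition cf_Delta :: "real \<Rightarrow> nat \<Rightarrow> real" where
  "cf_Delta \<rho> n = \<bar>real (cf_q \<rho> n) * \<rho> - real (cf_p \<rho> n)\<bar>"

definition holder_C :: "real \<Rightarrow> (real \<Rightarrow> real) \<Rightarrow> bool" where
  "holder_C \<alpha> h \<longleftrightarrow> continuous_on UNIV h \<and>
     (\<alpha> > 0 \<longrightarrow> (\<exists>C. \<forall>x y. \<bar>h x - h y\<bar> \<le> C * \<bar>x - y\<bar> powr \<alpha>))"

end

theory Submission
  imports Defs
begin

text \<open>Let G be the distribution function of the invariant density h. Then G conjugates the lift
  F to the translation by the rotation number, G(F^n x) = G x + n rho, so that
  (F^n)'(x) = h(x) / h(F^n x). Hence for phi = h o G^-1 the hypothesis says that a shift by
  q_n rho - p_n = +-Delta_n changes phi by at most C Delta_n^nu. Any increment t is a greedy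
  combination of the scales Delta_n; the number of steps at scale Delta_(n+1) is controlled by
  Delta_n / Delta_(n+1), which the Diophantine condition bounds by Delta_n^(-delta), and the
  scales decay geometrically along every second index. Summing gives phi in C^alpha with
  alpha = nu (1 + delta) - delta, and h = phi o G inherits this since G is Lipschitz.\<close>

declare cf_rem.simps(2) [simp del]

locale cf_expansion =
  fixes \<rho> :: real
  assumes irrational: "\<rho> \<notin> \<rat>" and pos: "0 < \<rho>" and less_one: "\<rho> < 1"
begin

lemma cf_rem_bounds: "cf_rem \<rho> n \<notin> \<rat> \<and> 0 < cf_rem \<rho> n \<and> cf_rem \<rho> n < 1"
proof (induction n)
  case 0
  then show ?case using irrational pos less_one by simp
next
  case (Suc n)
  define r where "r = cf_rem \<rho> n"
  have r: "r \<notin> \<rat>" "r \<noteq> 0" using Suc r_def by auto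
  have "1 / r \<notin> \<rat>"
    using r Rats_divide[OF Rats_1, of "1 / r"] by auto
  then have "frac (1 / r) \<notin> \<rat>"
    using Rats_add[of "frac (1 / r)" "of_int \<lfloor>1 / r\<rfloor>"] by (auto simp: frac_def)
  moreover have "frac (1 / r) \<noteq> 0"
    using calculation by (metis Rats_0)
  ultimately show ?case
    using frac_ge_0[of "1 / r"] frac_lt_1[of "1 / r"] by (simp add: r_def cf_rem.simps(2))
qed

lemma cf_rem_pos: "0 < cf_rem \<rho> n"
  using cf_rem_bounds by blast

lemma cf_rem_less_one: "cf_rem \<rho> n < 1"
  using cf_rem_bounds by blast

lemma cf_digit_Suc: "real (cf_digit \<rho> (Suc n)) = of_int \<lfloor>1 / cf_rem \<rho> n\<rfloor>"
proof -
  have "1 < 1 / cf_rem \<rho> n"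
    using cf_rem_pos cf_rem_less_one by simp
  then have "0 \<le> \<lfloor>1 / cf_rem \<rho> n\<rfloor>"
    by linarith
  then show ?thesis
    by (simp add: cf_digit_def)
qed

lemma cf_rem_Suc_eq: "cf_rem \<rho> (Suc n) = 1 / cf_rem \<rho> n - real (cf_digit \<rho> (Suc n))"
  by (simp add: cf_digit_Suc frac_def cf_rem.simps(2))

lemma cf_digit_Suc_ge_one: "1 \<le> cf_digit \<rho> (Suc n)"
proof -
  have "1 < 1 / cf_rem \<rho> n"
    using cf_rem_pos cf_rem_less_one by simp
  then show ?thesis
    using cf_digit_Suc[of n] by linarith
qed

lemma cf_error_eq_prod:
  "real (cf_q \<rho> n) * \<rho> - real (cf_p \<rho> n) = (-1) ^ n * (\<Prod>i\<le>n. cf_rem \<rho> i)"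
proof (induction n rule: induct_nat_012)
  case 0
  then show ?case by simp
next
  case 1
  have "\<rho> * cf_rem \<rho> 1 = 1 - real (cf_digit \<rho> 1) * \<rho>"
    using cf_rem_Suc_eq[of 0] pos by (simp add: field_simps)
  then show ?case by simp
next
  case (ge2 n)
  let ?P = "\<lambda>n. \<Prod>i\<le>n. cf_rem \<rho> i"
  have P_rec: "?P (Suc (Suc n)) = ?P n - real (cf_digit \<rho> (n + 2)) * ?P (Suc n)"
    using cf_rem_pos[of "Suc n"]
    by (simp add: cf_rem_Suc_eq[of "Suc n"] field_simps)
  have "real (cf_q \<rho> (Suc (Suc n))) * \<rho> - real (cf_p \<rho> (Suc (Suc n))) =
      real (cf_digit \<rho> (n + 2)) * (real (cf_q \<rho> (Suc n)) * \<rho> - real (cf_p \<rho> (Suc n)))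
      + (real (cf_q \<rho> n) * \<rho> - real (cf_p \<rho> n))"
    by (simp add: algebra_simps)
  also have "\<dots> = (-1) ^ n * (?P n - real (cf_digit \<rho> (n + 2)) * ?P (Suc n))"
    by (simp only: ge2 power_Suc) algebra
  finally show ?case
    unfolding P_rec by simp
qed

lemma cf_Delta_eq_prod: "cf_Delta \<rho> n = (\<Prod>i\<le>n. cf_rem \<rho> i)"
proof -
  have "0 < (\<Prod>i\<le>n. cf_rem \<rho> i)"
    using cf_rem_pos by (simp add: prod_pos)
  then show ?thesis
    by (simp add: cf_Delta_def cf_error_eq_prod abs_mult)
qed

lemma cf_Delta_pos: "0 < cf_Delta \<rho> n"
  using cf_rem_pos by (simp add: cf_Delta_eq_prod prod_pos)

lemma cf_Delta_Suc: "cf_Delta \<rho> (Suc n) = cf_Delta \<rho> n * cf_rem \<rho> (Suc n)"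
  by (simp add: cf_Delta_eq_prod)

lemma cf_Delta_Suc_le: "cf_Delta \<rho> (Suc n) \<le> cf_Delta \<rho> n"
  using cf_Delta_pos[of n] cf_rem_less_one[of "Suc n"]
  by (simp add: cf_Delta_Suc mult_le_cancel_left1)

text \<open>Either the first remainder is at most 1/2, or its partial quotient is 1 and the product
  equals one minus the first remainder.\<close>
lemma cf_rem_Suc_mult_le_half: "cf_rem \<rho> n * cf_rem \<rho> (Suc n) \<le> 1 / 2"
proof (cases "cf_rem \<rho> n \<le> 1 / 2")
  case True
  then show ?thesis
    using cf_rem_pos[of n] cf_rem_less_one[of "Suc n"]
    by (smt (verit) mult_left_le)
next
  case False
  then have "1 / cf_rem \<rho> n < 2" "1 < 1 / cf_rem \<rho> n"
    using cf_rem_less_one[of n] by (auto simp: field_simps)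
  then have "\<lfloor>1 / cf_rem \<rho> n\<rfloor> = 1"
    by linarith
  then have "cf_rem \<rho> n * cf_rem \<rho> (Suc n) = 1 - cf_rem \<rho> n"
    using cf_rem_pos[of n] by (simp add: cf_rem_Suc_eq cf_digit_Suc field_simps)
  then show ?thesis
    using False by simp
qed

lemma cf_Delta_Suc_Suc_le_half: "cf_Delta \<rho> (Suc (Suc n)) \<le> cf_Delta \<rho> n / 2"
  using mult_left_mono[OF cf_rem_Suc_mult_le_half[of "Suc n"] less_imp_le[OF cf_Delta_pos[of n]]]
  by (simp add: cf_Delta_Suc mult.assoc)

lemma cf_q_Suc_ge_one: "1 \<le> cf_q \<rho> (Suc n)"
proof (induction n)
  case 0
  then show ?case
    using cf_digit_Suc_ge_one[of 0] by simp
next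
  case (Suc n)
  then show ?case
    using cf_digit_Suc_ge_one[of "Suc n"] by (simp add: trans_le_add1)
qed

lemma cf_q_Delta_identity:
  "real (cf_q \<rho> (Suc n)) * cf_Delta \<rho> n + real (cf_q \<rho> n) * cf_Delta \<rho> (Suc n) = 1"
proof (induction n)
  case 0
  have "\<rho> * cf_rem \<rho> 1 = 1 - real (cf_digit \<rho> 1) * \<rho>"
    using cf_rem_Suc_eq[of 0] pos by (simp add: field_simps)
  then show ?case
    by (simp add: cf_Delta_eq_prod)
next
  case (Suc n)
  have Delta_rec: "cf_Delta \<rho> (Suc (Suc n)) =
      cf_Delta \<rho> n - real (cf_digit \<rho> (Suc (Suc n))) * cf_Delta \<rho> (Suc n)"
    using cf_rem_pos[of "Suc n"]
    by (simp add: cf_Delta_Suc cf_rem_Suc_eq[of "Suc n"] field_simps)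
  have "real (cf_q \<rho> (Suc (Suc n))) * cf_Delta \<rho> (Suc n) + real (cf_q \<rho> (Suc n)) * cf_Delta \<rho> (Suc (Suc n))
      = real (cf_q \<rho> (Suc n)) * cf_Delta \<rho> n + real (cf_q \<rho> n) * cf_Delta \<rho> (Suc n)"
    by (simp add: Delta_rec algebra_simps)
  with Suc show ?case
    by simp
qed

text \<open>Apply the Diophantine bound to the convergent p_(n+1)/q_(n+1) and use q_(n+1) Delta_n \<le> 1.\<close>
lemma cf_Delta_Suc_ge_powr:
  assumes "in_D \<delta> \<rho>" and "0 \<le> \<delta>"
  obtains c where "0 < c" and "\<And>n. c * cf_Delta \<rho> n powr (1 + \<delta>) \<le> cf_Delta \<rho> (Suc n)"
proof -
  obtain C where C_pos: "0 < C" and dioph: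
      "\<And>(p::int) (q::nat). 0 < q \<Longrightarrow> C * real q powr (-2 - \<delta>) \<le> \<bar>\<rho> - real_of_int p / real q\<bar>"
    using assms(1) unfolding in_D_def by blast
  have "C * cf_Delta \<rho> n powr (1 + \<delta>) \<le> cf_Delta \<rho> (Suc n)" for n
  proof -
    define q where "q = cf_q \<rho> (Suc n)"
    define p where "p = cf_p \<rho> (Suc n)"
    have q_pos: "1 \<le> real q"
      using cf_q_Suc_ge_one unfolding q_def by simp
    have "real q * cf_Delta \<rho> n \<le> 1"
      using cf_q_Delta_identity[of n] cf_Delta_pos[of "Suc n"] unfolding q_def
      by (smt (verit) of_nat_0_le_iff mult_nonneg_nonneg)
    then have "(real q * cf_Delta \<rho> n) powr (1 + \<delta>) \<le> 1"
      using cf_Delta_pos[of n] assms(2) by (intro powr_le1) auto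
    then have "real q powr (1 + \<delta>) * cf_Delta \<rho> n powr (1 + \<delta>) \<le> 1"
      by (simp add: powr_mult)
    then have "cf_Delta \<rho> n powr (1 + \<delta>) \<le> 1 / real q powr (1 + \<delta>)"
      using q_pos by (simp add: pos_le_divide_eq mult.commute)
    also have "\<dots> = real q powr (-1 - \<delta>)"
      by (simp add: powr_minus_divide[symmetric])
    also have "\<dots> = real q * real q powr (-2 - \<delta>)"
      using q_pos by (simp add: powr_mult_base)
    finally have "C * cf_Delta \<rho> n powr (1 + \<delta>) \<le> real q * (C * real q powr (-2 - \<delta>))"
      using C_pos by (simp add: mult_left_mono algebra_simps)
    also have "\<dots> \<le> real q * \<bar>\<rho> - real_of_int (int p) / real q\<bar>"
      using dioph[of q "int p"] q_pos by (intro mult_left_mono) auto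
    also have "\<dots> = \<bar>real q * \<rho> - real p\<bar>"
      using q_pos by (simp add: abs_mult[symmetric] field_simps)
    also have "\<dots> = cf_Delta \<rho> (Suc n)"
      by (simp add: cf_Delta_def q_def p_def)
    finally show ?thesis .
  qed
  with C_pos that show ?thesis by blast
qed

end

lemma nat_multiple_remainder:
  fixes d t :: real
  assumes "0 < d" and "0 \<le> t"
  obtains a :: nat where "real a * d \<le> t" and "t < real a * d + d"
proof
  have "0 \<le> \<lfloor>t / d\<rfloor>"
    using assms by simp
  then have a: "real (nat \<lfloor>t / d\<rfloor>) = of_int \<lfloor>t / d\<rfloor>"
    by simp
  have "real (nat \<lfloor>t / d\<rfloor>) \<le> t / d"
    unfolding a by (rule of_int_floor_le)
  then show "real (nat \<lfloor>t / d\<rfloor>) * d \<le> t"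
    using assms(1) by (simp add: pos_le_divide_eq)
  have "t / d < real (nat \<lfloor>t / d\<rfloor>) + 1"
    unfolding a by (rule real_of_int_floor_add_one_gt)
  then show "t < real (nat \<lfloor>t / d\<rfloor>) * d + d"
    using assms(1) by (simp add: pos_divide_less_eq algebra_simps)
qed

locale holder_scales =
  fixes D :: "nat \<Rightarrow> real" and c \<delta> :: real
  assumes scale_pos: "\<And>n. 0 < D n"
    and scale_Suc_le: "\<And>n. D (Suc n) \<le> D n"
    and scale_Suc_Suc_le_half: "\<And>n. D (Suc (Suc n)) \<le> D n / 2"
    and scale_Suc_ge: "\<And>n. c * D n powr (1 + \<delta>) \<le> D (Suc n)"
    and c_pos: "0 < c"
    and \<delta>_nonneg: "0 \<le> \<delta>"
begin

lemma scale_tendsto_zero: "D \<longlonglongrightarrow> 0"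
proof -
  have "decseq D"
    using scale_Suc_le by (simp add: decseq_SucI)
  moreover have nonneg: "\<forall>n. 0 \<le> D n"
    by (simp add: scale_pos less_imp_le)
  ultimately obtain L where L: "D \<longlonglongrightarrow> L"
    using decseq_convergent by blast
  have "(\<lambda>n. D (Suc (Suc n))) \<longlonglongrightarrow> L"
    using L by (intro LIMSEQ_Suc)
  moreover have "(\<lambda>n. D n / 2) \<longlonglongrightarrow> L / 2"
    using L by (intro tendsto_divide tendsto_const) simp_all
  ultimately have "L \<le> L / 2"
    by (rule LIMSEQ_le) (use scale_Suc_Suc_le_half in blast)
  moreover have "0 \<le> L"
    using L nonneg by (intro LIMSEQ_le_const) auto
  ultimately have "L = 0"
    by linarith
  with L show ?thesis
    by simp
qed

lemma scale_bracket:
  assumes "0 < t" and "t < D 0"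
  obtains n where "D (Suc n) \<le> t" and "t < D n"
proof -
  obtain N where "\<forall>n\<ge>N. D n < t"
    using order_tendstoD(2)[OF scale_tendsto_zero assms(1)] unfolding eventually_sequentially ..
  then have "\<exists>n. D n \<le> t"
    by (auto intro: less_imp_le)
  then obtain n where "\<not> D n \<le> t" "D (Suc n) \<le> t"
    using exists_least_lemma[of "\<lambda>n. D n \<le> t"] assms(2) by auto
  with that show ?thesis
    by simp
qed

text \<open>This is where the Diophantine lower bound on the scales enters: a step of size D (n + 1)
  costs relatively little on an interval of length at most D n.\<close>
lemma mult_scale_Suc_powr_le:
  assumes "\<nu> \<le> 1" and "0 < x" and "x \<le> D n"
  shows "x * D (Suc n) powr (\<nu> - 1) \<le> c powr (\<nu> - 1) * x powr (\<nu> * (1 + \<delta>) - \<delta>)"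
proof -
  have "c * x powr (1 + \<delta>) \<le> c * D n powr (1 + \<delta>)"
    using assms c_pos \<delta>_nonneg by (intro mult_left_mono powr_mono2) auto
  also have "\<dots> \<le> D (Suc n)"
    by (rule scale_Suc_ge)
  finally have "D (Suc n) powr (\<nu> - 1) \<le> (c * x powr (1 + \<delta>)) powr (\<nu> - 1)"
    using assms c_pos by (intro powr_mono2') auto
  also have "\<dots> = c powr (\<nu> - 1) * x powr ((1 + \<delta>) * (\<nu> - 1))"
    using c_pos assms by (simp add: powr_mult powr_powr)
  finally have "x * D (Suc n) powr (\<nu> - 1) \<le> c powr (\<nu> - 1) * (x * x powr ((1 + \<delta>) * (\<nu> - 1)))"
    using assms by (simp add: mult_left_mono mult.left_commute)
  also have "x * x powr ((1 + \<delta>) * (\<nu> - 1)) = x powr (\<nu> * (1 + \<delta>) - \<delta>)"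
    using assms by (simp add: powr_mult_base algebra_simps)
  finally show ?thesis .
qed

lemma scale_Suc_Suc_powr_le:
  assumes "0 < \<alpha>"
  shows "D (Suc (Suc n)) powr \<alpha> \<le> 2 powr (- \<alpha>) * D n powr \<alpha>"
proof -
  have "D (Suc (Suc n)) powr \<alpha> \<le> (D n / 2) powr \<alpha>"
    using scale_Suc_Suc_le_half[of n] scale_pos[of "Suc (Suc n)"] assms
    by (intro powr_mono2) auto
  also have "\<dots> = 2 powr (- \<alpha>) * D n powr \<alpha>"
    using scale_pos[of n] by (simp add: powr_divide powr_minus field_simps)
  finally show ?thesis .
qed

end

locale scale_regular_function = holder_scales +
  fixes \<phi> :: "real \<Rightarrow> real" and K \<nu> :: real
  assumes phi_cont: "\<And>x. isCont \<phi> x"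
    and phi_step: "\<And>n y. \<bar>\<phi> (y + D n) - \<phi> y\<bar> \<le> K * D n powr \<nu>"
    and K_nonneg: "0 \<le> K"
    and \<nu>_le_one: "\<nu> \<le> 1"
begin

abbreviation \<alpha> :: real where "\<alpha> \<equiv> \<nu> * (1 + \<delta>) - \<delta>"

lemma phi_step_multiple: "\<bar>\<phi> (y + real a * D n) - \<phi> y\<bar> \<le> real a * K * D n powr \<nu>"
proof (induction a)
  case 0
  then show ?case by simp
next
  case (Suc a)
  have "\<bar>\<phi> (y + real (Suc a) * D n) - \<phi> y\<bar> \<le>
      \<bar>\<phi> ((y + real a * D n) + D n) - \<phi> (y + real a * D n)\<bar> + \<bar>\<phi> (y + real a * D n) - \<phi> y\<bar>"
    by (simp add: algebra_simps)
  also have "\<dots> \<le> K * D n powr \<nu> + real a * K * D n powr \<nu>"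
    using phi_step Suc by (rule add_mono)
  finally show ?case
    by (simp add: algebra_simps)
qed

text \<open>Peeling off the largest multiple of D (n + 1) below t leaves a remainder below D (n + 1).\<close>
lemma phi_increment_split:
  assumes "0 \<le> t" and "t < D n"
  obtains y' t' where "0 \<le> t'" and "t' < D (Suc n)" and "y' + t' = y + t"
    and "\<bar>\<phi> y' - \<phi> y\<bar> \<le> K * t * D (Suc n) powr (\<nu> - 1)"
proof -
  obtain a :: nat where a: "real a * D (Suc n) \<le> t" "t < real a * D (Suc n) + D (Suc n)"
    using nat_multiple_remainder[OF scale_pos assms(1)] .
  have "\<bar>\<phi> (y + real a * D (Suc n)) - \<phi> y\<bar> \<le> K * (real a * D (Suc n)) * D (Suc n) powr (\<nu> - 1)"
    using phi_step_multiple[of y a "Suc n"] scale_pos[of "Suc n"]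
    by (simp add: powr_mult_base algebra_simps)
  also have "\<dots> \<le> K * t * D (Suc n) powr (\<nu> - 1)"
    using a K_nonneg by (intro mult_right_mono mult_left_mono) auto
  finally show ?thesis
    using a by (intro that[of "t - real a * D (Suc n)" "y + real a * D (Suc n)"]) auto
qed

context
  fixes A :: real
  assumes \<alpha>_pos: "0 < \<alpha>"
    and A_nonneg: "0 \<le> A"
    and A_large: "K * c powr (\<nu> - 1) \<le> A * (1 - 2 powr (- \<alpha>))"
begin

text \<open>The cost of each level of the greedy expansion is absorbed by the geometric decay of
  D n powr \<alpha> along every second index.\<close>
lemma phi_increment_approx:
  assumes "0 \<le> t" and "t < D n"
  shows "\<exists>s. 0 \<le> s \<and> s < D (n + k) \<and> \<bar>\<phi> (y + t - s) - \<phi> y\<bar> \<le> A * (D n powr \<alpha> + D (Suc n) powr \<alpha>)"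
  using assms
proof (induction k arbitrary: n y t)
  case 0
  have "0 \<le> A * (D n powr \<alpha> + D (Suc n) powr \<alpha>)"
    using A_nonneg by simp
  with 0 show ?case
    by (intro exI[of _ t]) auto
next
  case (Suc k)
  obtain y' t' where t': "0 \<le> t'" "t' < D (Suc n)" "y' + t' = y + t"
    and y': "\<bar>\<phi> y' - \<phi> y\<bar> \<le> K * t * D (Suc n) powr (\<nu> - 1)"
    using phi_increment_split[OF Suc.prems] .
  obtain s where s: "0 \<le> s" "s < D (Suc n + k)"
    and rest: "\<bar>\<phi> (y' + t' - s) - \<phi> y'\<bar> \<le> A * (D (Suc n) powr \<alpha> + D (Suc (Suc n)) powr \<alpha>)"
    using Suc.IH[OF t'(1,2)] by blast
  have "t * D (Suc n) powr (\<nu> - 1) \<le> D n * D (Suc n) powr (\<nu> - 1)"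
    using Suc.prems by (intro mult_right_mono) auto
  then have "K * t * D (Suc n) powr (\<nu> - 1) \<le> K * (D n * D (Suc n) powr (\<nu> - 1))"
    using K_nonneg by (simp add: mult.assoc mult_left_mono)
  also have "\<dots> \<le> K * c powr (\<nu> - 1) * D n powr \<alpha>"
    using mult_scale_Suc_powr_le[OF \<nu>_le_one scale_pos order_refl, of n] K_nonneg
    by (simp add: mult_left_mono mult.assoc)
  also have "\<dots> \<le> A * (1 - 2 powr (- \<alpha>)) * D n powr \<alpha>"
    using A_large by (simp add: mult_right_mono)
  finally have first: "\<bar>\<phi> y' - \<phi> y\<bar> \<le> A * D n powr \<alpha> - A * (2 powr (- \<alpha>) * D n powr \<alpha>)"
    using y' by (simp add: algebra_simps)
  have "A * D (Suc (Suc n)) powr \<alpha> \<le> A * (2 powr (- \<alpha>) * D n powr \<alpha>)"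
    using scale_Suc_Suc_powr_le[OF \<alpha>_pos] A_nonneg by (rule mult_left_mono)
  then have "\<bar>\<phi> (y + t - s) - \<phi> y\<bar> \<le> A * (D n powr \<alpha> + D (Suc n) powr \<alpha>)"
    using first rest t'(3) by (simp add: algebra_simps)
  with s show ?case
    by (intro exI[of _ s]) simp
qed

lemma phi_increment_bound:
  assumes "0 \<le> t" and "t < D n"
  shows "\<bar>\<phi> (y + t) - \<phi> y\<bar> \<le> A * (D n powr \<alpha> + D (Suc n) powr \<alpha>)"
proof -
  have "\<forall>k. \<exists>s. 0 \<le> s \<and> s < D (n + k) \<and> \<bar>\<phi> (y + t - s) - \<phi> y\<bar> \<le> A * (D n powr \<alpha> + D (Suc n) powr \<alpha>)"
    using phi_increment_approx[OF assms] by blast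
  then obtain s where s: "\<And>k. 0 \<le> s k" "\<And>k. s k < D (n + k)"
    and bound: "\<And>k. \<bar>\<phi> (y + t - s k) - \<phi> y\<bar> \<le> A * (D n powr \<alpha> + D (Suc n) powr \<alpha>)"
    by metis
  have tail: "(\<lambda>k. D (n + k)) \<longlonglongrightarrow> 0"
    using LIMSEQ_ignore_initial_segment[OF scale_tendsto_zero, of n] by (simp add: add.commute)
  have "s \<longlonglongrightarrow> 0"
  proof (rule tendsto_sandwich[OF _ _ tendsto_const tail])
    show "\<forall>\<^sub>F k in sequentially. 0 \<le> s k"
      using s(1) by simp
    show "\<forall>\<^sub>F k in sequentially. s k \<le> D (n + k)"
      using s(2) by (simp add: less_imp_le)
  qed
  then have "(\<lambda>k. y + t - s k) \<longlonglongrightarrow> y + t"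
    using tendsto_diff[OF tendsto_const, of s 0 sequentially "y + t"] by simp
  then have "(\<lambda>k. \<phi> (y + t - s k)) \<longlonglongrightarrow> \<phi> (y + t)"
    by (rule isCont_tendsto_compose[OF phi_cont])
  then have "(\<lambda>k. \<bar>\<phi> (y + t - s k) - \<phi> y\<bar>) \<longlonglongrightarrow> \<bar>\<phi> (y + t) - \<phi> y\<bar>"
    by (intro tendsto_intros)
  then show ?thesis
    by (rule LIMSEQ_le_const2) (use bound in blast)
qed


lemma phi_small_increment:
  assumes "0 < t" and "t < D 0"
  shows "\<bar>\<phi> (y + t) - \<phi> y\<bar> \<le> (K * c powr (\<nu> - 1) + 2 * A) * t powr \<alpha>"
proof -
  obtain n where n: "D (Suc n) \<le> t" "t < D n"
    using scale_bracket assms by blast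
  obtain y' t' where t': "0 \<le> t'" "t' < D (Suc n)" "y' + t' = y + t"
    and y': "\<bar>\<phi> y' - \<phi> y\<bar> \<le> K * t * D (Suc n) powr (\<nu> - 1)"
    using phi_increment_split[OF less_imp_le[OF assms(1)] n(2), where y = y] .
  have "\<bar>\<phi> (y + t) - \<phi> y\<bar> \<le>
      A * (D (Suc n) powr \<alpha> + D (Suc (Suc n)) powr \<alpha>) + K * t * D (Suc n) powr (\<nu> - 1)"
    unfolding t'(3)[symmetric] using phi_increment_bound[OF t'(1,2), of y'] y' by linarith
  also have "\<dots> \<le> A * (t powr \<alpha> + t powr \<alpha>) + K * c powr (\<nu> - 1) * t powr \<alpha>"
  proof (rule add_mono)
    have "D (Suc n) powr \<alpha> \<le> t powr \<alpha>"
      using n(1) scale_pos[of "Suc n"] \<alpha>_pos by (intro powr_mono2) auto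
    moreover have "D (Suc (Suc n)) powr \<alpha> \<le> t powr \<alpha>"
      using order_trans[OF scale_Suc_le n(1)] scale_pos[of "Suc (Suc n)"] \<alpha>_pos
      by (intro powr_mono2) auto
    ultimately show "A * (D (Suc n) powr \<alpha> + D (Suc (Suc n)) powr \<alpha>) \<le> A * (t powr \<alpha> + t powr \<alpha>)"
      using A_nonneg by (intro mult_left_mono add_mono)
    show "K * t * D (Suc n) powr (\<nu> - 1) \<le> K * c powr (\<nu> - 1) * t powr \<alpha>"
      using mult_scale_Suc_powr_le[OF \<nu>_le_one assms(1)] n K_nonneg
      by (simp add: mult.assoc mult_left_mono)
  qed
  also have "\<dots> = (K * c powr (\<nu> - 1) + 2 * A) * t powr \<alpha>"
    by (simp add: algebra_simps)
  finally show ?thesis .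
qed

end

lemma phi_holder:
  assumes "0 < \<alpha>" and bounded: "\<And>u v. \<bar>\<phi> u - \<phi> v\<bar> \<le> M"
  obtains B where "\<And>u v. \<bar>\<phi> u - \<phi> v\<bar> \<le> B * \<bar>u - v\<bar> powr \<alpha>"
proof -
  define A where "A = K * c powr (\<nu> - 1) / (1 - 2 powr (- \<alpha>))"
  have "2 powr (- \<alpha>) < 1"
    using assms(1) by (simp add: powr_less_one)
  then have A: "0 \<le> A" "K * c powr (\<nu> - 1) \<le> A * (1 - 2 powr (- \<alpha>))"
    using K_nonneg unfolding A_def by auto
  define B where "B = max (K * c powr (\<nu> - 1) + 2 * A) (M / D 0 powr \<alpha>)"
  have increment: "\<bar>\<phi> (y + t) - \<phi> y\<bar> \<le> B * t powr \<alpha>" if "0 < t" for y t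
  proof (cases "t < D 0")
    case True
    have "K * c powr (\<nu> - 1) + 2 * A \<le> B"
      unfolding B_def by simp
    then show ?thesis
      using phi_small_increment[OF assms(1) A that True, of y]
      by (meson order_trans mult_right_mono powr_ge_zero)
  next
    case False
    have "\<bar>\<phi> (y + t) - \<phi> y\<bar> \<le> M / D 0 powr \<alpha> * D 0 powr \<alpha>"
      using bounded scale_pos[of 0] by simp
    also have "\<dots> \<le> M / D 0 powr \<alpha> * t powr \<alpha>"
      using False scale_pos[of 0] bounded[of 0 0] assms(1) by (intro mult_left_mono powr_mono2) auto
    also have "\<dots> \<le> B * t powr \<alpha>"
      unfolding B_def by (intro mult_right_mono) auto
    finally show ?thesis .
  qed
  have "\<bar>\<phi> u - \<phi> v\<bar> \<le> B * \<bar>u - v\<bar> powr \<alpha>" for u v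
    using increment[of "u - v" v] increment[of "v - u" u] assms(1)
    by (cases u v rule: linorder_cases) (auto simp: abs_minus_commute)
  with that show ?thesis .
qed

end

lemma shift_of_int_of_shift_one:
  fixes f :: "real \<Rightarrow> real"
  assumes shift: "\<And>x. f (x + 1) = f x + c"
  shows "f (x + of_int k) = f x + of_int k * c"
proof (induction k rule: int_induct[where k = 0])
  case base
  then show ?case by simp
next
  case (step1 i)
  then show ?case
    using shift[of "x + of_int i"] by (simp add: algebra_simps)
next
  case (step2 i)
  then show ?case
    using shift[of "x + of_int (i - 1)"] by (simp add: algebra_simps)
qed

lemma continuous_periodic_attains_bounds:
  fixes f :: "real \<Rightarrow> real"
  assumes cont: "continuous_on UNIV f" and periodic: "\<And>x. f (x + 1) = f x"
  obtains a b where "\<And>x. f a \<le> f x" and "\<And>x. f x \<le> f b"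
proof -
  have f_frac: "f x = f (frac x)" for x
    using shift_of_int_of_shift_one[of f 0 "frac x" "\<lfloor>x\<rfloor>"] periodic by (simp add: frac_def)
  have frac_in: "frac x \<in> {0..1}" for x :: real
    using frac_ge_0[of x] frac_lt_1[of x] by simp
  obtain a where a: "\<forall>y\<in>{0..1}. f a \<le> f y"
    using continuous_attains_inf[OF compact_Icc _ continuous_on_subset[OF cont subset_UNIV], of 0 1]
    by auto
  obtain b where b: "\<forall>y\<in>{0..1}. f y \<le> f b"
    using continuous_attains_sup[OF compact_Icc _ continuous_on_subset[OF cont subset_UNIV], of 0 1]
    by auto
  show ?thesis
  proof (rule that)
    show "f a \<le> f x" and "f x \<le> f b" for x
      using a b frac_in[of x] unfolding f_frac[of x] by auto
  qed
qed

text \<open>The oriented integral of h from 0 to x; the library integral over the interval {x..0}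
  vanishes unless x \<le> 0.\<close>
definition primitive :: "(real \<Rightarrow> real) \<Rightarrow> real \<Rightarrow> real" where
  "primitive h x = integral {0..x} h - integral {x..0} h"

lemma primitive_diff:
  fixes h :: "real \<Rightarrow> real"
  assumes cont: "continuous_on UNIV h" and "a \<le> b"
  shows "primitive h b - primitive h a = integral {a..b} h"
proof -
  have int: "h integrable_on {u..v}" for u v
    using cont continuous_on_subset integrable_continuous_real by blast
  have left_zero: "integral {x..0} h = 0" if "0 \<le> x" for x
    using that by (cases "x = 0") auto
  have right_zero: "integral {0..x} h = 0" if "x \<le> 0" for x
    using that by (cases "x = 0") auto
  consider "0 \<le> a" | "a \<le> 0" "0 \<le> b" | "b \<le> 0"
    using assms(2) by linarith
  then show ?thesis
  proof cases
    case 1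
    then show ?thesis
      using Henstock_Kurzweil_Integration.integral_combine[OF 1 assms(2) int] left_zero[of a] left_zero[of b] assms(2)
      by (simp add: primitive_def)
  next
    case 2
    then show ?thesis
      using Henstock_Kurzweil_Integration.integral_combine[OF 2 int] right_zero[of a] left_zero[of b]
      by (simp add: primitive_def)
  next
    case 3
    then show ?thesis
      using Henstock_Kurzweil_Integration.integral_combine[OF assms(2) 3 int] right_zero[of b]
        right_zero[OF order_trans[OF assms(2) 3]]
      by (simp add: primitive_def)
  qed
qed

lemma has_real_derivative_primitive:
  fixes h :: "real \<Rightarrow> real"
  assumes cont: "continuous_on UNIV h"
  shows "(primitive h has_real_derivative h x) (at x)"
proof -
  have "((\<lambda>u. integral {x - 1..u} h) has_real_derivative h x) (at x within {x - 1..x + 1})"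
    by (rule integral_has_real_derivative) (use cont continuous_on_subset in auto)
  moreover have "x \<in> interior {x - 1..x + 1}"
    by simp
  ultimately have "((\<lambda>u. integral {x - 1..u} h) has_real_derivative h x) (at x)"
    by (metis at_within_interior)
  from DERIV_add[OF DERIV_const this]
  have "((\<lambda>u. primitive h (x - 1) + integral {x - 1..u} h) has_real_derivative h x) (at x)"
    by simp
  then show ?thesis
  proof (rule has_field_derivative_transform_within_open[where S = "{x - 1<..}"])
    show "primitive h (x - 1) + integral {x - 1..u} h = primitive h u" if "u \<in> {x - 1<..}" for u
      using primitive_diff[OF cont, of "x - 1" u] that by simp
  qed auto
qed

lemma primitive_add_period:
  fixes h :: "real \<Rightarrow> real"
  assumes cont: "continuous_on UNIV h" and periodic: "\<And>x. h (x + 1) = h x"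
  shows "primitive h (x + 1) = primitive h x + integral {0..1} h"
proof -
  have "((\<lambda>y. primitive h (y + 1) - primitive h y) has_real_derivative 0) (at y)" for y
  proof -
    have "((\<lambda>y. y + 1) has_real_derivative 1) (at y)"
      using DERIV_add[OF DERIV_ident DERIV_const[of 1 "at y"]] by simp
    then have "((\<lambda>y. primitive h (y + 1)) has_real_derivative h (y + 1) * 1) (at y)"
      by (rule DERIV_chain2[OF has_real_derivative_primitive[OF cont]])
    from DERIV_diff[OF this has_real_derivative_primitive[OF cont]] show ?thesis
      using periodic by simp
  qed
  then have "primitive h (x + 1) - primitive h x = primitive h (0 + 1) - primitive h 0"
    using DERIV_isconst_all[of "\<lambda>y. primitive h (y + 1) - primitive h y" x 0] by blast
  then show ?thesis
    using primitive_diff[OF cont, of 0 1] by simp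
qed

lemma primitive_dist_lower:
  fixes h :: "real \<Rightarrow> real"
  assumes cont: "continuous_on UNIV h" and lower: "\<And>x. m \<le> h x"
  shows "m * \<bar>x - y\<bar> \<le> \<bar>primitive h x - primitive h y\<bar>"
proof -
  have int: "h integrable_on {u..v}" for u v
    using cont continuous_on_subset integrable_continuous_real by blast
  have oriented: "m * \<bar>a - b\<bar> \<le> \<bar>primitive h a - primitive h b\<bar>" if "b \<le> a" for a b
  proof -
    have "integral {b..a} (\<lambda>_. m) \<le> integral {b..a} h"
      by (rule integral_le) (use int lower in auto)
    then have "m * (a - b) \<le> primitive h a - primitive h b"
      using primitive_diff[OF cont that] that by (simp add: mult.commute)
    then show ?thesis
      using that by simp
  qed
  show ?thesis
  proof (cases "y \<le> x")
    case True
    then show ?thesis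
      by (rule oriented)
  next
    case False
    then have "x \<le> y"
      by simp
    then show ?thesis
      using oriented[OF \<open>x \<le> y\<close>]
      by (simp only: abs_minus_commute[of x y] abs_minus_commute[of "primitive h x"])
  qed
qed

lemma primitive_dist_upper:
  fixes h :: "real \<Rightarrow> real"
  assumes cont: "continuous_on UNIV h" and bound: "\<And>x. \<bar>h x\<bar> \<le> M"
  shows "\<bar>primitive h x - primitive h y\<bar> \<le> M * \<bar>x - y\<bar>"
proof -
  have oriented: "\<bar>primitive h a - primitive h b\<bar> \<le> M * \<bar>a - b\<bar>" if "b \<le> a" for a b
    using integral_bound[OF that continuous_on_subset[OF cont subset_UNIV], of M] bound
      primitive_diff[OF cont that] that
    by simp
  show ?thesis
  proof (cases "y \<le> x")
    case True
    then show ?thesis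
      by (rule oriented)
  next
    case False
    then have "x \<le> y"
      by simp
    then show ?thesis
      using oriented[OF \<open>x \<le> y\<close>]
      by (simp only: abs_minus_commute[of x y] abs_minus_commute[of "primitive h x"])
  qed
qed

locale invariant_density =
  fixes F h :: "real \<Rightarrow> real"
  assumes F_mono: "mono F"
    and F_differentiable: "\<And>x. F differentiable (at x)"
    and h_cont: "continuous_on UNIV h"
    and h_pos: "\<And>x. 0 < h x"
    and h_periodic: "\<And>x. h (x + 1) = h x"
    and h_integral: "integral {0..1} h = 1"
    and h_invariant: "\<And>a b. a \<le> b \<Longrightarrow> integral {F a..F b} h = integral {a..b} h"
begin

abbreviation G :: "real \<Rightarrow> real" where "G \<equiv> primitive h"

definition rotation :: real where "rotation = G (F 0) - G 0"

lemma G_deriv: "(G has_real_derivative h x) (at x)"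
  using has_real_derivative_primitive[OF h_cont] .

lemma G_comp_F: "G (F x) = G x + rotation"
proof (cases "0 \<le> x")
  case True
  then have "G (F x) - G (F 0) = G x - G 0"
    using primitive_diff[OF h_cont] monoD[OF F_mono] h_invariant by simp
  then show ?thesis
    unfolding rotation_def by simp
next
  case False
  then have "G (F 0) - G (F x) = G 0 - G x"
    using primitive_diff[OF h_cont] monoD[OF F_mono] h_invariant by simp
  then show ?thesis
    unfolding rotation_def by simp
qed

lemma G_comp_iterate: "G ((F ^^ n) x) = G x + real n * rotation"
  by (induction n) (simp_all add: G_comp_F algebra_simps)

lemma G_add_one: "G (x + 1) = G x + 1"
  using primitive_add_period[OF h_cont h_periodic] h_integral by simp

lemma G_minus_id_bounded:
  obtains E where "\<And>x. \<bar>G x - x\<bar> \<le> E"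
proof -
  have "continuous_on UNIV (\<lambda>x. G x - x)"
    using DERIV_isCont[OF G_deriv] by (intro continuous_intros continuous_at_imp_continuous_on) auto
  moreover have "G (x + 1) - (x + 1) = G x - x" for x
    by (simp add: G_add_one)
  ultimately obtain a b where "\<And>x. G a - a \<le> G x - x" "\<And>x. G x - x \<le> G b - b"
    using continuous_periodic_attains_bounds[of "\<lambda>x. G x - x"] by blast
  then have "\<bar>G x - x\<bar> \<le> \<bar>G a - a\<bar> + \<bar>G b - b\<bar>" for x
    by (smt (verit))
  then show ?thesis
    by (rule that)
qed

lemma iterate_tendsto_rotation: "(\<lambda>n. (F ^^ n) 0 / real n) \<longlonglongrightarrow> rotation"
proof -
  obtain E where E: "\<And>x. \<bar>G x - x\<bar> \<le> E"
    using G_minus_id_bounded by blast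
  have "\<bar>(F ^^ n) 0 / real n - rotation\<bar> \<le> (\<bar>G 0\<bar> + E) / real n" if "0 < n" for n
  proof -
    have "(F ^^ n) 0 / real n - rotation = (G 0 - (G ((F ^^ n) 0) - (F ^^ n) 0)) / real n"
      using that by (simp add: G_comp_iterate field_simps)
    also have "\<bar>\<dots>\<bar> \<le> (\<bar>G 0\<bar> + E) / real n"
      unfolding abs_divide abs_of_nat using E[of "(F ^^ n) 0"] by (intro divide_right_mono) arith+
    finally show ?thesis .
  qed
  then have "(\<lambda>n. (F ^^ n) 0 / real n - rotation) \<longlonglongrightarrow> 0"
    by (intro Lim_null_comparison[OF _ lim_const_over_n[of "\<bar>G 0\<bar> + E"]] eventually_sequentiallyI[of 1])
      simp
  then show ?thesis
    by (simp add: Lim_null[symmetric])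
qed

lemma G_bij: "bij G"
proof (rule bijI)
  obtain m where "0 < m" "\<And>x. m \<le> h x"
    using continuous_periodic_attains_bounds[OF h_cont h_periodic] h_pos by metis
  then show "inj G"
  proof (intro injI)
    fix x y
    assume "G x = G y"
    then have "m * \<bar>x - y\<bar> \<le> 0"
      using primitive_dist_lower[OF h_cont \<open>\<And>x. m \<le> h x\<close>, of x y] by simp
    with \<open>0 < m\<close> show "x = y"
      by (simp add: mult_le_0_iff)
  qed
  show "surj G"
  proof (rule surjI)
    fix y
    obtain E where E: "\<And>x. \<bar>G x - x\<bar> \<le> E"
      using G_minus_id_bounded by blast
    have "\<exists>x\<ge>y - E. x \<le> y + E \<and> G x = y"
      using E[of "y - E"] E[of "y + E"] DERIV_isCont[OF G_deriv]
      by (intro IVT) auto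
    then show "G (SOME x. G x = y) = y"
      by (metis (mono_tags) someI)
  qed
qed

lemma G_inv_lipschitz:
  assumes "0 < m" and "\<And>x. m \<le> h x"
  shows "\<bar>inv G u - inv G v\<bar> \<le> \<bar>u - v\<bar> / m"
  using primitive_dist_lower[OF h_cont assms(2), of "inv G u" "inv G v"] assms(1)
  by (simp add: bij_is_surj[OF G_bij] surj_f_inv_f pos_le_divide_eq mult.commute)

lemma isCont_density_comp_inv_G: "isCont (\<lambda>y. h (inv G y)) y"
proof -
  obtain m where m: "0 < m" "\<And>x. m \<le> h x"
    using continuous_periodic_attains_bounds[OF h_cont h_periodic] h_pos by metis
  have "(1 / m)-lipschitz_on UNIV (inv G)"
    using G_inv_lipschitz[OF m] m(1) by (auto simp: lipschitz_on_def dist_real_def)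
  then have "isCont (inv G) y"
    using lipschitz_on_continuous_on continuous_on_eq_continuous_at open_UNIV by blast
  moreover have "isCont h (inv G y)"
    using h_cont continuous_on_eq_continuous_at open_UNIV by blast
  ultimately show ?thesis
    by (rule isCont_o2)
qed

lemma iterate_differentiable: "(F ^^ n) differentiable (at x)"
proof (induction n arbitrary: x)
  case 0
  show ?case
    by (simp add: id_def)
next
  case (Suc n)
  then show ?case
    using differentiable_chain_at[OF Suc.IH F_differentiable] by (simp add: o_def)
qed

text \<open>Differentiating the conjugacy relation G \<circ> F^n = G + n \<cdot> rotation.\<close>
lemma deriv_iterate: "deriv (F ^^ n) x = h x / h ((F ^^ n) x)"
proof -
  obtain D where D: "((F ^^ n) has_real_derivative D) (at x)"
    using iterate_differentiable real_differentiable_def by blast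
  have "((\<lambda>x. G ((F ^^ n) x)) has_real_derivative h ((F ^^ n) x) * D) (at x)"
    by (rule DERIV_chain2[OF G_deriv D])
  moreover have "((\<lambda>x. G ((F ^^ n) x)) has_real_derivative h x) (at x)"
    unfolding G_comp_iterate by (auto intro!: derivative_eq_intros G_deriv)
  ultimately have "h ((F ^^ n) x) * D = h x"
    by (rule DERIV_unique)
  then show ?thesis
    using DERIV_imp_deriv[OF D] h_pos[of "(F ^^ n) x"] by (simp add: field_simps)
qed


text \<open>In the coordinate y = G x the map F^q - p is the translation by q rotation - p, and
  h (F^q x) = h x / (F^q)' x by the previous lemma.\<close>
lemma density_shift_bound:
  fixes q :: nat and p :: int
  assumes upper: "\<And>x. h x \<le> M" and deriv_close: "\<And>\<xi>. \<bar>deriv (F ^^ q) \<xi> - 1\<bar> \<le> \<epsilon>"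
  shows "\<bar>h (inv G (y + \<bar>real q * rotation - of_int p\<bar>)) - h (inv G y)\<bar> \<le> M * \<epsilon>"
proof -
  define e where "e = real q * rotation - of_int p"
  have shift: "\<bar>h (inv G y) - h (inv G (y + e))\<bar> \<le> M * \<epsilon>" for y
  proof -
    define x where "x = inv G y"
    define z where "z = (F ^^ q) x - of_int p"
    have "G x = y"
      by (simp add: x_def bij_is_surj[OF G_bij] surj_f_inv_f)
    then have "G z = y + e"
      using shift_of_int_of_shift_one[of G 1 "(F ^^ q) x" "- p", OF G_add_one]
      by (simp add: z_def e_def G_comp_iterate)
    then have z: "inv G (y + e) = z"
      using inv_f_f[OF bij_is_inj[OF G_bij]] by metis
    have hz: "h z = h ((F ^^ q) x)"
      using shift_of_int_of_shift_one[of h 0 "(F ^^ q) x" "- p"] h_periodic by (simp add: z_def)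
    have "\<bar>h x - h z\<bar> = \<bar>h x / h z - 1\<bar> * h z"
      using h_pos[of z] by (simp add: abs_of_pos[symmetric] abs_mult[symmetric] field_simps)
    also have "\<dots> \<le> \<epsilon> * M"
      using deriv_close[of x] deriv_iterate[of q x] hz upper[of z] h_pos[of z]
      by (intro mult_mono) (auto intro: order_trans[OF abs_ge_zero])
    finally show ?thesis
      using z by (simp add: x_def mult.commute)
  qed
  show ?thesis
  proof (cases "0 \<le> e")
    case True
    then show ?thesis
      using shift[of y] by (simp add: e_def[symmetric] abs_minus_commute)
  next
    case False
    then show ?thesis
      using shift[of "y + \<bar>e\<bar>"] by (simp add: e_def[symmetric])
  qed
qed

end

lemma holder_comp_lipschitz:
  fixes \<phi> g :: "real \<Rightarrow> real"
  assumes holder: "\<And>u v. \<bar>\<phi> u - \<phi> v\<bar> \<le> B * \<bar>u - v\<bar> powr \<alpha>"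
    and lipschitz: "\<And>x y. \<bar>g x - g y\<bar> \<le> L * \<bar>x - y\<bar>"
    and "0 \<le> \<alpha>"
  shows "\<bar>\<phi> (g x) - \<phi> (g y)\<bar> \<le> max B 0 * L powr \<alpha> * \<bar>x - y\<bar> powr \<alpha>"
proof -
  have "0 \<le> L"
    using lipschitz[of 1 0] by simp
  have "\<bar>\<phi> (g x) - \<phi> (g y)\<bar> \<le> max B 0 * \<bar>g x - g y\<bar> powr \<alpha>"
    using holder[of "g x" "g y"] by (smt (verit) mult_right_mono powr_ge_zero)
  also have "\<dots> \<le> max B 0 * (L * \<bar>x - y\<bar>) powr \<alpha>"
    using lipschitz \<open>0 \<le> \<alpha>\<close> by (intro mult_left_mono powr_mono2) auto
  also have "\<dots> = max B 0 * L powr \<alpha> * \<bar>x - y\<bar> powr \<alpha>"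
    using \<open>0 \<le> L\<close> by (simp add: powr_mult)
  finally show ?thesis .
qed

theorem lemma6:
  fixes F F' h :: "real \<Rightarrow> real" and \<delta> \<nu> \<rho> :: real
  assumes "\<delta> \<ge> 0"
    and F_deriv: "\<And>x. (F has_real_derivative F' x) (at x)"
    and F'_cont: "continuous_on UNIV F'"
    and F'_pos: "\<And>x. F' x > 0"
    and F_lift: "\<And>x. F (x + 1) = F x + 1"
    and rot: "(\<lambda>n. (F ^^ n) 0 / real n) \<longlonglongrightarrow> \<rho>"
    and rho_range: "0 < \<rho>" "\<rho> < 1"
    and rho_D: "in_D \<delta> \<rho>"
    and h_cont: "continuous_on UNIV h"
    and h_pos: "\<And>x. h x > 0"
    and h_per: "\<And>x. h (x + 1) = h x"
    and h_prob: "integral {0..1} h = 1"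
    and h_inv: "\<And>a b. a \<le> b \<Longrightarrow> integral {F a..F b} h = integral {a..b} h"
    and nu_range: "\<delta> / (1 + \<delta>) \<le> \<nu>" "\<nu> \<le> 1"
    and deriv_bound: "\<exists>C. \<forall>n \<xi>. \<bar>deriv (F ^^ cf_q \<rho> n) \<xi> - 1\<bar> \<le> C * cf_Delta \<rho> n powr \<nu>"
  shows "holder_C (\<nu> * (1 + \<delta>) - \<delta>) h"
proof (cases "0 < \<nu> * (1 + \<delta>) - \<delta>")
  case False
  with h_cont show ?thesis
    by (simp add: holder_C_def)
next
  case True
  interpret cf_expansion \<rho>
    using rho_D rho_range by unfold_locales (simp_all add: in_D_def)
  have "mono F"
    using F_deriv F'_pos by (intro monoI deriv_nonneg_imp_mono[where g = F and g' = F']) (auto intro: less_imp_le)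
  interpret invariant_density F h
    using \<open>mono F\<close> F_deriv h_cont h_pos h_per h_prob h_inv
    by unfold_locales (auto simp: real_differentiable_def)
  have rotation: "rotation = \<rho>"
    using LIMSEQ_unique[OF iterate_tendsto_rotation rot] .
  obtain M where M: "\<And>x. h x \<le> M"
    using continuous_periodic_attains_bounds[OF h_cont h_per] by metis
  obtain C where C: "\<And>n \<xi>. \<bar>deriv (F ^^ cf_q \<rho> n) \<xi> - 1\<bar> \<le> C * cf_Delta \<rho> n powr \<nu>"
    using deriv_bound by blast
  have "0 \<le> C"
    using order_trans[OF abs_ge_zero C[of 0 0]] cf_Delta_pos[of 0] by (simp add: zero_le_mult_iff)
  moreover have "0 < M"
    using M h_pos order.strict_trans2 by blast
  ultimately have "0 \<le> M * C"
    by simp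
  obtain c where c: "0 < c" "\<And>n. c * cf_Delta \<rho> n powr (1 + \<delta>) \<le> cf_Delta \<rho> (Suc n)"
    using cf_Delta_Suc_ge_powr[OF rho_D \<open>0 \<le> \<delta>\<close>] by blast
  interpret scale_regular_function "cf_Delta \<rho>" c \<delta> "\<lambda>y. h (inv G y)" "M * C" \<nu>
  proof unfold_locales
    show "\<bar>h (inv G (y + cf_Delta \<rho> n)) - h (inv G y)\<bar> \<le> M * C * cf_Delta \<rho> n powr \<nu>" for n y
      using density_shift_bound[OF M C[of n], where y = y and p = "int (cf_p \<rho> n)"] rotation
      by (simp add: cf_Delta_def mult.assoc)
  qed (use cf_Delta_pos cf_Delta_Suc_le cf_Delta_Suc_Suc_le_half c \<open>0 \<le> \<delta>\<close> \<open>0 \<le> M * C\<close>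
      isCont_density_comp_inv_G nu_range in auto)
  have "\<bar>h (inv G u) - h (inv G v)\<bar> \<le> M" for u v
    using M[of "inv G u"] M[of "inv G v"] h_pos[of "inv G u"] h_pos[of "inv G v"]
    by (auto simp: abs_le_iff)
  then obtain B where "\<And>u v. \<bar>h (inv G u) - h (inv G v)\<bar> \<le> B * \<bar>u - v\<bar> powr (\<nu> * (1 + \<delta>) - \<delta>)"
    using phi_holder[OF True] by blast
  then have "\<bar>h x - h y\<bar> \<le> max B 0 * M powr (\<nu> * (1 + \<delta>) - \<delta>) * \<bar>x - y\<bar> powr (\<nu> * (1 + \<delta>) - \<delta>)"
    for x y
    using holder_comp_lipschitz[of "\<lambda>y. h (inv G y)" B _ G M] primitive_dist_upper[OF h_cont] M h_pos True
    by (simp add: inv_f_f[OF bij_is_inj[OF G_bij]] less_imp_le abs_of_pos)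
  with h_cont show ?thesis
    unfolding holder_C_def by blast
qed

end
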